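(* Every formula occurring in a tree-like $\mathrm{LM}_{\rightarrow}$ deduction $\partial$ of a sequent $S$ is a semi-subformula of a formula occurring in $S$. In particular, if $S$ is $\Rightarrow\rho$, then every formula $\alpha$ occurring in $\partial$ is a semi-subformula of $\rho$, hence $|\alpha|\le|\rho|$, and thus $\mu(\partial)\le|\rho|$.
   Context: Formulas of $\mathcal{L}_{\rightarrow}$ are built from propositional variables using only $\rightarrow$; $|\alpha|$ is the number of occurrences of $\rightarrow$ in $\alpha$. The semi-subformulas of $\rho$ form the least set containing $\rho$ such that whenever $\alpha\rightarrow\beta$ is in it, so are $\alpha$ and $\beta$, and whenever $(\alpha\rightarrow\beta)\rightarrow\gamma$ is in it, so is $\beta\rightarrow\gamma$. Sequents are $\Gamma\Rightarrow\alpha$ with $\Gamma$ a finite multiset. $\mathrm{LM}_{\rightarrow}$ has axioms $\Gamma,p\Rightarrow p$ ($p$ a variable) and rules: from $\Gamma,\alpha\Rightarrow\beta$ infer $\Gamma\Rightarrow\alpha\rightarrow\beta$ provided $\Gamma$ contains no $(\alpha\rightarrow\beta)\rightarrow\gamma$; from $\Gamma,\alpha,\beta\rightarrow\gamma\Rightarrow\beta$ infer $\Gamma,(\alpha\rightarrow\beta)\rightarrow\gamma\Rightarrow\alpha\rightarrow\beta$; from $\Gamma,p,\gamma\Rightarrow q$ infer $\Gamma,p,p\rightarrow\gamma\Rightarrow q$ ($p\neq q$ variables, $q$ occurring in $\Gamma$ or $\gamma$); from $\Gamma,\alpha,\beta\rightarrow\gamma\Rightarrow\beta$ and $\Gamma,\gamma\Rightarrow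 q$ infer $\Gamma,(\alpha\rightarrow\beta)\rightarrow\gamma\Rightarrow q$ ($q$ a variable occurring in $\Gamma$ or $\gamma$). $\mu(\partial)$ is the maximum of $|\alpha|$ over formulas $\alpha$ occurring in $\partial$. *)

theory Defs
  imports Main "HOL-Library.Multiset"
begin

datatype 'v fm = Var 'v | Imp "'v fm" "'v fm"

text \<open>|alpha|: number of occurrences of the implication connective\<close>
fun imps :: "'v fm \<Rightarrow> nat" where
  "imps (Var p) = 0"
| "imps (Imp a b) = Suc (imps a + imps b)"

fun vars :: "'v fm \<Rightarrow> 'v set" where
  "vars (Var p) = {p}"
| "vars (Imp a b) = vars a \<union> vars b"

inductive_set semisub :: "'v fm \<Rightarrow> 'v fm set" for \<rho> :: "'v fm" where
  self: "\<rho> \<in> semisub \<rho>"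
| impL: "Imp a b \<in> semisub \<rho> \<Longrightarrow> a \<in> semisub \<rho>"
| impR: "Imp a b \<in> semisub \<rho> \<Longrightarrow> b \<in> semisub \<rho>"
| semi: "Imp (Imp a b) c \<in> semisub \<rho> \<Longrightarrow> Imp b c \<in> semisub \<rho>"

type_synonym 'v sequent = "'v fm multiset \<times> 'v fm"

definition seq_fmls :: "'v sequent \<Rightarrow> 'v fm set" where
  "seq_fmls S = set_mset (fst S) \<union> {snd S}"

definition occurs_in_ctx :: "'v \<Rightarrow> 'v fm multiset \<Rightarrow> bool" where
  "occurs_in_ctx q \<Gamma> \<longleftrightarrow> (\<exists>\<delta>\<in>#\<Gamma>. q \<in> vars \<delta>)"

inductive lm_rule :: "'v sequent list \<Rightarrow> 'v sequent \<Rightarrow> bool" where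
  ax: "lm_rule [] (\<Gamma> + {#Var p#}, Var p)"
| impR: "(\<forall>\<gamma>. Imp (Imp \<alpha> \<beta>) \<gamma> \<notin># \<Gamma>) \<Longrightarrow>
         lm_rule [(\<Gamma> + {#\<alpha>#}, \<beta>)] (\<Gamma>, Imp \<alpha> \<beta>)"
| impImpR: "lm_rule [(\<Gamma> + {#\<alpha>, Imp \<beta> \<gamma>#}, \<beta>)]
                    (\<Gamma> + {#Imp (Imp \<alpha> \<beta>) \<gamma>#}, Imp \<alpha> \<beta>)"
| impVarL: "p \<noteq> q \<Longrightarrow> occurs_in_ctx q \<Gamma> \<or> q \<in> vars \<gamma> \<Longrightarrow>
         lm_rule [(\<Gamma> + {#Var p, \<gamma>#}, Var q)]
                 (\<Gamma> + {#Var p, Imp (Var p) \<gamma>#}, Var q)"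
| impImpL: "occurs_in_ctx q \<Gamma> \<or> q \<in> vars \<gamma> \<Longrightarrow>
         lm_rule [(\<Gamma> + {#\<alpha>, Imp \<beta> \<gamma>#}, \<beta>), (\<Gamma> + {#\<gamma>#}, Var q)]
                 (\<Gamma> + {#Imp (Imp \<alpha> \<beta>) \<gamma>#}, Var q)"

datatype 'v dtree = DNode "'v sequent" "'v dtree list"

fun concl :: "'v dtree \<Rightarrow> 'v sequent" where
  "concl (DNode S ts) = S"

inductive lm_deriv :: "'v dtree \<Rightarrow> bool" where
  "lm_rule (map concl ts) S \<Longrightarrow> (\<forall>t\<in>set ts. lm_deriv t) \<Longrightarrow> lm_deriv (DNode S ts)"

fun fmls :: "'v dtree \<Rightarrow> 'v fm set" where
  "fmls (DNode S ts) = seq_fmls S \<union> (\<Union>t\<in>set ts. fmls t)"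

definition mu :: "'v dtree \<Rightarrow> nat" where
  "mu d = Max (imps ` fmls d)"

end

theory Submission
  imports Defs
begin

text \<open>Every formula in a premise of an LM rule is a semi-subformula of a formula of the
  conclusion: apart from context formulas and plain subformulas of the principal formula,
  a premise only contains the \<open>\<beta> \<rightarrow> \<gamma>\<close> of a principal \<open>(\<alpha> \<rightarrow> \<beta>) \<rightarrow> \<gamma>\<close>, which is exactly
  what the extra closure clause of semi-subformulas admits. As the semi-subformula
  relation is transitive, this propagates from the root through the whole deduction;
  for \<open>\<Rightarrow> \<rho>\<close> the bound on \<open>\<mu>\<close> follows since semi-subformulas never contain more
  implications than the formula itself.\<close>

lemma semisub_trans:
  assumes "\<beta> \<in> semisub \<alpha>" and "\<alpha> \<in> semisub \<rho>"
  shows "\<beta> \<in> semisub \<rho>"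
  using assms(1) by induction (use assms(2) in \<open>auto intro: semisub.intros\<close>)

lemma UN_semisub_mono:
  assumes "A \<subseteq> (\<Union>\<beta>\<in>B. semisub \<beta>)"
  shows "(\<Union>\<alpha>\<in>A. semisub \<alpha>) \<subseteq> (\<Union>\<beta>\<in>B. semisub \<beta>)"
proof
  fix \<phi> assume "\<phi> \<in> (\<Union>\<alpha>\<in>A. semisub \<alpha>)"
  then obtain \<alpha> \<beta> where "\<phi> \<in> semisub \<alpha>" "\<alpha> \<in> semisub \<beta>" "\<beta> \<in> B"
    using assms by blast
  then show "\<phi> \<in> (\<Union>\<beta>\<in>B. semisub \<beta>)"
    using semisub_trans by blast
qed

lemma imps_le_of_semisub: "\<alpha> \<in> semisub \<rho> \<Longrightarrow> imps \<alpha> \<le> imps \<rho>"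
  by (induction rule: semisub.induct) auto

lemma semisub_Imp [simp]:
  "a \<in> semisub (Imp a b)"
  "b \<in> semisub (Imp a b)"
  "a \<in> semisub (Imp (Imp a b) c)"
  "b \<in> semisub (Imp (Imp a b) c)"
  "Imp b c \<in> semisub (Imp (Imp a b) c)"
  by (meson semisub.intros)+

lemma lm_rule_principal_semisub:
  assumes "lm_rule ps S"
  shows "\<exists>\<chi>\<in>seq_fmls S. \<forall>P\<in>set ps. seq_fmls P \<subseteq> seq_fmls S \<union> semisub \<chi>"
  using assms
proof cases
  case (impR \<alpha> \<beta> \<Gamma>)
  then show ?thesis by (auto simp: seq_fmls_def intro!: bexI[of _ "Imp \<alpha> \<beta>"])
next
  case (impImpR \<Gamma> \<alpha> \<beta> \<gamma>)
  then show ?thesis by (auto simp: seq_fmls_def intro!: bexI[of _ "Imp (Imp \<alpha> \<beta>) \<gamma>"])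
next
  case (impVarL p q \<Gamma> \<gamma>)
  then show ?thesis by (auto simp: seq_fmls_def intro!: bexI[of _ "Imp (Var p) \<gamma>"])
next
  case (impImpL q \<Gamma> \<gamma> \<alpha> \<beta>)
  then show ?thesis by (auto simp: seq_fmls_def intro!: bexI[of _ "Imp (Imp \<alpha> \<beta>) \<gamma>"])
qed (auto simp: seq_fmls_def)

lemma lm_rule_premise_semisub:
  assumes "lm_rule ps S" and "P \<in> set ps"
  shows "seq_fmls P \<subseteq> (\<Union>\<beta>\<in>seq_fmls S. semisub \<beta>)"
  using lm_rule_principal_semisub[OF assms(1)] assms(2) semisub.self by blast

lemma lm_deriv_fmls_semisub:
  "lm_deriv d \<Longrightarrow> fmls d \<subseteq> (\<Union>\<beta>\<in>seq_fmls (concl d). semisub \<beta>)"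
proof (induction rule: lm_deriv.induct)
  case (1 ts S)
  have "fmls t \<subseteq> (\<Union>\<beta>\<in>seq_fmls S. semisub \<beta>)" if "t \<in> set ts" for t
  proof -
    have "seq_fmls (concl t) \<subseteq> (\<Union>\<beta>\<in>seq_fmls S. semisub \<beta>)"
      using lm_rule_premise_semisub[OF "1.hyps"(1)] that by simp
    then have "(\<Union>\<alpha>\<in>seq_fmls (concl t). semisub \<alpha>) \<subseteq> (\<Union>\<beta>\<in>seq_fmls S. semisub \<beta>)"
      by (rule UN_semisub_mono)
    with "1.IH" that show ?thesis
      by blast
  qed
  then show ?case
    using semisub.self by auto
qed

lemma finite_fmls: "finite (fmls d)"
  by (induction d) (auto simp: seq_fmls_def)

lemma succedent_in_fmls: "snd (concl d) \<in> fmls d"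
  by (cases d) (auto simp: seq_fmls_def)

theorem lemma2:
  fixes d :: "'v dtree" and S :: "'v sequent"
  assumes "lm_deriv d" and "concl d = S"
  shows "(\<forall>\<alpha>\<in>fmls d. \<exists>\<beta>\<in>seq_fmls S. \<alpha> \<in> semisub \<beta>) \<and>
         (\<forall>\<rho>. S = ({#}, \<rho>) \<longrightarrow>
            (\<forall>\<alpha>\<in>fmls d. \<alpha> \<in> semisub \<rho> \<and> imps \<alpha> \<le> imps \<rho>) \<and> mu d \<le> imps \<rho>)"
proof (intro conjI allI impI)
  show closed: "\<forall>\<alpha>\<in>fmls d. \<exists>\<beta>\<in>seq_fmls S. \<alpha> \<in> semisub \<beta>"
    using lm_deriv_fmls_semisub[OF assms(1)] assms(2) by blast
  fix \<rho> assume "S = ({#}, \<rho>)"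
  then show semisub_\<rho>: "\<forall>\<alpha>\<in>fmls d. \<alpha> \<in> semisub \<rho> \<and> imps \<alpha> \<le> imps \<rho>"
    using closed by (auto simp: seq_fmls_def imps_le_of_semisub)
  have "fmls d \<noteq> {}"
    using succedent_in_fmls[of d] by blast
  then show "mu d \<le> imps \<rho>"
    unfolding mu_def using semisub_\<rho> finite_fmls[of d] by (simp add: Max_le_iff)
qed

end
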